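(* Let $(\eta_k)_{k\in\mathbb{N}}$ be independent identically distributed random variables with values in $\mathbb{N}$, and let $$\eta=\sum_{k=1}^\infty\frac{(-1)^{k-1}}{\eta_1(\eta_1+\eta_2)\cdots(\eta_1+\eta_2+\dots+\eta_k)}.$$ Then the distribution of $\eta$ is pure (purely discrete or purely singularly continuous), and it cannot be absolutely continuous with respect to Lebesgue measure. *)

theory Defs
  imports "HOL-Probability.Probability"
begin

text \<open>The alternating series  sum_{k>=1} (-1)^(k-1) / (a_1 (a_1+a_2) ... (a_1+...+a_k)),
  written with 0-based indices: a 0 plays the role of eta_1.\<close>
definition alt_series :: "(nat \<Rightarrow> nat) \<Rightarrow> real" where
  "alt_series a = (\<Sum>k. (-1) ^ k / (\<Prod>j\<le>k. real (\<Sum>i\<le>j. a i)))"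

definition purely_discrete :: "real measure \<Rightarrow> bool" where
  "purely_discrete \<mu> \<longleftrightarrow> (\<exists>S. countable S \<and> emeasure \<mu> S = emeasure \<mu> UNIV)"

definition purely_singular_continuous :: "real measure \<Rightarrow> bool" where
  "purely_singular_continuous \<mu> \<longleftrightarrow>
     (\<forall>x. emeasure \<mu> {x} = 0) \<and>
     (\<exists>N \<in> sets borel. emeasure lborel N = 0 \<and> emeasure \<mu> N = emeasure \<mu> UNIV)"

end

theory Submission
  imports Defs
begin

(* For a sequence a of positive integers the value
     x = sum_k (-1)^k / (a_0 (a_0 + a_1) ... (a_0 + ... + a_k))
   satisfies x = (1 - x') / a_0, where x' is a series of the same shape (all partial sums shifted
   by a_0) for the tail of a, and x lies in [1/(a_0 + 1), 1/a_0). Hence a is determined by x, so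
   an atom of the distribution has probability at most prod_{k<K} P(eta_1 = a_k); this tends to 0
   unless eta_1 is almost surely constant, in which case the distribution is a point mass.

   For singularity fix d with P(eta_1 = d) > 0. By independence the block d, d, d occurs
   infinitely often almost surely. The values of all sequences with such a block at position n
   lie in a Borel set of Lebesgue measure O(1/n^2), so by Borel-Cantelli the limit superior of
   these sets is a Lebesgue null set, and it carries the whole distribution. *)

definition alt_term :: "nat \<Rightarrow> (nat \<Rightarrow> nat) \<Rightarrow> nat \<Rightarrow> real" where
  "alt_term B a k = 1 / (\<Prod>j\<le>k. real (B + (\<Sum>i\<le>j. a i)))"

definition offset_alt_series :: "nat \<Rightarrow> (nat \<Rightarrow> nat) \<Rightarrow> real" where
  "offset_alt_series B a = (\<Sum>k. (-1) ^ k * alt_term B a k)"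

lemma alt_series_eq_offset_alt_series: "alt_series a = offset_alt_series 0 a"
  unfolding alt_series_def offset_alt_series_def alt_term_def by simp

lemma Suc_le_partial_sum:
  assumes "\<forall>i. 0 < a i"
  shows "Suc j \<le> B + (\<Sum>i\<le>j. a i)"
proof -
  have "(\<Sum>i\<le>j. 1) \<le> (\<Sum>i\<le>j. a i)"
    using assms by (intro sum_mono) (simp add: Suc_le_eq)
  then show ?thesis by simp
qed

lemma alt_term_Suc: "alt_term B a (Suc k) = alt_term B a k / real (B + (\<Sum>i\<le>Suc k. a i))"
  unfolding alt_term_def by simp

lemma alt_term_denominator_ge:
  assumes "\<forall>i. 0 < a i"
  shows "real (Suc k) \<le> (\<Prod>j\<le>k. real (B + (\<Sum>i\<le>j. a i)))"
proof (induction k)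
  case 0
  then show ?case using of_nat_mono[OF Suc_le_partial_sum[OF assms, of 0 B]] by simp
next
  case (Suc k)
  have "real (Suc (Suc k)) \<le> real (B + (\<Sum>i\<le>Suc k. a i))"
    by (rule of_nat_mono[OF Suc_le_partial_sum[OF assms]])
  then have "1 * real (Suc (Suc k)) \<le> (\<Prod>j\<le>k. real (B + (\<Sum>i\<le>j. a i))) * real (B + (\<Sum>i\<le>Suc k. a i))"
    using Suc.IH by (intro mult_mono) auto
  then show ?case by simp
qed

lemma alt_term_pos: "\<forall>i. 0 < a i \<Longrightarrow> 0 < alt_term B a k"
  using alt_term_denominator_ge[of a k B] unfolding alt_term_def by simp

lemma alt_term_le: "\<forall>i. 0 < a i \<Longrightarrow> alt_term B a k \<le> 1 / real (Suc k)"
  unfolding alt_term_def using alt_term_denominator_ge[of a k B] by (intro divide_left_mono) auto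

lemma alt_term_Suc_le:
  assumes "\<forall>i. 0 < a i"
  shows "alt_term B a (Suc k) \<le> alt_term B a k"
proof -
  have "real (Suc (Suc k)) \<le> real (B + (\<Sum>i\<le>Suc k. a i))"
    by (rule of_nat_mono[OF Suc_le_partial_sum[OF assms]])
  then show ?thesis
    unfolding alt_term_Suc using alt_term_pos[OF assms, of B k] by (simp add: divide_le_eq)
qed

lemma alt_term_tendsto_zero:
  assumes "\<forall>i. 0 < a i"
  shows "alt_term B a \<longlonglongrightarrow> 0"
proof (rule Lim_null_comparison)
  show "\<forall>\<^sub>F k in sequentially. norm (alt_term B a k) \<le> 1 / real (Suc k)"
    using alt_term_pos[OF assms] alt_term_le[OF assms] by (simp add: less_imp_le)
  show "(\<lambda>k. 1 / real (Suc k)) \<longlonglongrightarrow> 0"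
    using LIMSEQ_Suc[OF lim_inverse_n'] by simp
qed

lemma offset_alt_series_Leibniz:
  assumes "\<forall>i. 0 < a i"
  shows summable_offset_alt_series: "summable (\<lambda>k. (-1) ^ k * alt_term B a k)"
    and offset_alt_series_lower: "alt_term B a 0 - alt_term B a 1 \<le> offset_alt_series B a"
    and offset_alt_series_upper: "offset_alt_series B a \<le> alt_term B a 0"
    and offset_alt_series_upper2:
      "offset_alt_series B a \<le> alt_term B a 0 - alt_term B a 1 + alt_term B a 2"
proof -
  note Leibniz = summable_Leibniz'[OF alt_term_tendsto_zero[OF assms]
      less_imp_le[OF alt_term_pos[OF assms]] alt_term_Suc_le[OF assms], of B]
  show "summable (\<lambda>k. (-1) ^ k * alt_term B a k)"
    by (fact Leibniz(1))
  show "alt_term B a 0 - alt_term B a 1 \<le> offset_alt_series B a"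
    using Leibniz(2)[of 1] unfolding offset_alt_series_def by (simp add: numeral_2_eq_2)
  show "offset_alt_series B a \<le> alt_term B a 0"
    using Leibniz(4)[of 0] unfolding offset_alt_series_def by simp
  show "offset_alt_series B a \<le> alt_term B a 0 - alt_term B a 1 + alt_term B a 2"
    using Leibniz(4)[of 1] unfolding offset_alt_series_def by (simp add: numeral_3_eq_3 numeral_2_eq_2)
qed

lemma alt_term_Suc_shift:
  "alt_term B a (Suc k) = alt_term (B + a 0) (\<lambda>i. a (Suc i)) k / real (B + a 0)"
proof -
  have "(\<Prod>j\<le>Suc k. real (B + (\<Sum>i\<le>j. a i)))
      = real (B + (\<Sum>i\<le>0. a i)) * (\<Prod>j\<le>k. real (B + (\<Sum>i\<le>Suc j. a i)))"
    by (rule prod.atMost_Suc_shift)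
  also have "\<dots> = real (B + a 0) * (\<Prod>j\<le>k. real (B + a 0 + (\<Sum>i\<le>j. a (Suc i))))"
    by (simp only: sum.atMost_Suc_shift add.assoc) simp
  finally show ?thesis
    unfolding alt_term_def by simp
qed

lemma offset_alt_series_rec:
  assumes "\<forall>i. 0 < a i"
  shows "offset_alt_series B a = (1 - offset_alt_series (B + a 0) (\<lambda>i. a (Suc i))) / real (B + a 0)"
proof -
  let ?C = "real (B + a 0)"
  have shifted: "\<forall>i. 0 < a (Suc i)" using assms by simp
  have "offset_alt_series B a = alt_term B a 0 + (\<Sum>k. (-1) ^ Suc k * alt_term B a (Suc k))"
    unfolding offset_alt_series_def
    using suminf_split_head[OF summable_offset_alt_series[OF assms, of B]] by simp
  also have "(\<Sum>k. (-1) ^ Suc k * alt_term B a (Suc k))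
      = (\<Sum>k. (-1) ^ k * alt_term (B + a 0) (\<lambda>i. a (Suc i)) k * (- 1 / ?C))"
    by (simp add: alt_term_Suc_shift)
  also have "\<dots> = offset_alt_series (B + a 0) (\<lambda>i. a (Suc i)) * (- 1 / ?C)"
    unfolding offset_alt_series_def
    by (rule suminf_mult2[OF summable_offset_alt_series[OF shifted], symmetric])
  finally show ?thesis
    by (simp add: alt_term_def diff_divide_distrib)
qed

lemma offset_alt_series_pos:
  assumes "\<forall>i. 0 < a i"
  shows "0 < offset_alt_series B a"
proof -
  have "real (Suc (Suc 0)) \<le> real (B + (\<Sum>i\<le>Suc 0. a i))"
    by (rule of_nat_mono[OF Suc_le_partial_sum[OF assms]])
  then have "alt_term B a 1 < alt_term B a 0"
    using alt_term_Suc[of B a 0] alt_term_pos[OF assms, of B 0] by (simp add: divide_less_eq)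
  then show ?thesis
    using offset_alt_series_lower[OF assms, of B] by simp
qed

lemma offset_alt_series_bounds:
  assumes "\<forall>i. 0 < a i"
  shows "1 / real (B + a 0 + 1) \<le> offset_alt_series B a"
    and "offset_alt_series B a < 1 / real (B + a 0)"
proof -
  let ?C = "real (B + a 0)" and ?t = "offset_alt_series (B + a 0) (\<lambda>i. a (Suc i))"
  have shifted: "\<forall>i. 0 < a (Suc i)" using assms by simp
  have C: "1 \<le> ?C" using of_nat_mono[OF Suc_le_partial_sum[OF assms, of 0 B]] by simp
  have t_pos: "0 < ?t" by (rule offset_alt_series_pos[OF shifted])
  have "?t \<le> 1 / real (B + a 0 + a 1)"
    using offset_alt_series_upper[OF shifted, of "B + a 0"] by (simp add: alt_term_def)
  also have "\<dots> \<le> 1 / (?C + 1)"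
    using assms C by (intro divide_left_mono) (auto simp: Suc_le_eq)
  finally have "?t \<le> 1 / (?C + 1)" .
  then show "1 / real (B + a 0 + 1) \<le> offset_alt_series B a"
    using C by (simp add: offset_alt_series_rec[OF assms] field_simps)
  show "offset_alt_series B a < 1 / ?C"
    using t_pos C by (simp add: offset_alt_series_rec[OF assms] divide_strict_right_mono)
qed

lemma offset_alt_series_less_of_head_less:
  assumes "\<forall>i. 0 < a i" "\<forall>i. 0 < b i" "a 0 < b 0"
  shows "offset_alt_series B b < offset_alt_series B a"
proof -
  have "offset_alt_series B b < 1 / real (B + b 0)"
    by (rule offset_alt_series_bounds(2)[OF assms(2)])
  also have "\<dots> \<le> 1 / real (B + a 0 + 1)"
    using assms by (intro divide_left_mono) auto
  also have "\<dots> \<le> offset_alt_series B a"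
    by (rule offset_alt_series_bounds(1)[OF assms(1)])
  finally show ?thesis .
qed

lemma offset_alt_series_inj:
  assumes "\<forall>i. 0 < a i" "\<forall>i. 0 < b i" "offset_alt_series B a = offset_alt_series B b"
  shows "a = b"
proof
  fix k
  from assms show "a k = b k"
  proof (induction k arbitrary: B a b)
    case 0
    then show ?case
      by (metis linorder_neqE_nat offset_alt_series_less_of_head_less order_less_irrefl)
  next
    case (Suc k)
    have head: "a 0 = b 0"
      using Suc.prems by (metis linorder_neqE_nat offset_alt_series_less_of_head_less order_less_irrefl)
    have "0 < real (B + a 0)" using Suc.prems(1) by (metis add_gr_0 of_nat_0_less_iff)
    then have "offset_alt_series (B + a 0) (\<lambda>i. a (Suc i)) = offset_alt_series (B + a 0) (\<lambda>i. b (Suc i))"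
      using Suc.prems head
      by (simp add: offset_alt_series_rec[of a B] offset_alt_series_rec[of b B] field_simps)
    with Suc.prems show ?case
      using Suc.IH[of "\<lambda>i. a (Suc i)" "\<lambda>i. b (Suc i)"] by simp
  qed
qed

lemma emeasure_lborel_affine_vimage:
  fixes c t :: real
  assumes "c \<noteq> 0" and S: "S \<in> sets borel"
  shows "emeasure lborel ((\<lambda>x. t + c * x) -` S) = ennreal (1 / \<bar>c\<bar>) * emeasure lborel S"
proof -
  let ?g = "\<lambda>x. t + c * x"
  have "emeasure lborel S = ennreal \<bar>c\<bar> * emeasure (distr lborel borel ?g) S"
    using S by (subst lborel_real_affine[OF assms(1)]) (simp add: emeasure_density_const)
  also have "emeasure (distr lborel borel ?g) S = emeasure lborel (?g -` S)"
    using S by (simp add: emeasure_distr)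
  finally have "ennreal (1 / \<bar>c\<bar>) * emeasure lborel S
      = (ennreal (1 / \<bar>c\<bar>) * ennreal \<bar>c\<bar>) * emeasure lborel (?g -` S)"
    by (simp add: mult.assoc)
  also have "ennreal (1 / \<bar>c\<bar>) * ennreal \<bar>c\<bar> = 1"
    using assms(1) by (simp add: ennreal_mult'[symmetric])
  finally show ?thesis by simp
qed

lemma sums_inverse_consecutive_products:
  "(\<lambda>c. 1 / (real (B + c + 1) * real (B + c + 2))) sums (1 / real (B + 1))"
proof -
  have "(\<lambda>c. 1 / real (B + c + 1)) \<longlonglongrightarrow> 0"
    using LIMSEQ_ignore_initial_segment[OF lim_inverse_n', of "B + 1"] by (simp add: add_ac)
  from telescope_sums'[OF this]
  have "(\<lambda>c. 1 / real (B + c + 1) - 1 / real (B + Suc c + 1)) sums (1 / real (B + 0 + 1) - 0)" .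
  moreover have "1 / real (B + c + 1) - 1 / real (B + Suc c + 1)
      = 1 / (real (B + c + 1) * real (B + c + 2))" for c
    by (simp add: field_simps)
  ultimately show ?thesis by simp
qed

text \<open>A cover of the values offset_alt_series B a of all positive sequences with
  a n = a (n + 1) = a (n + 2) = d: for n = 0 the interval given by the first three Leibniz
  bounds, and for larger n the union over all first entries Suc c of the preimages under the
  recursion offset_alt_series_rec.\<close>
fun triple_run_cover :: "nat \<Rightarrow> nat \<Rightarrow> nat \<Rightarrow> real set" where
  "triple_run_cover d 0 B =
     {1 / real (B + d) - 1 / (real (B + d) * real (B + 2 * d)) ..
      1 / real (B + d) - 1 / (real (B + d) * real (B + 2 * d))
        + 1 / (real (B + d) * real (B + 2 * d) * real (B + 3 * d))}"
| "triple_run_cover d (Suc n) B =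
     (\<Union>c. (\<lambda>x. 1 - real (B + Suc c) * x) -` triple_run_cover d n (B + Suc c))"

lemma offset_alt_series_in_triple_run_cover:
  assumes "\<forall>i. 0 < a i" "a n = d" "a (Suc n) = d" "a (Suc (Suc n)) = d"
  shows "offset_alt_series B a \<in> triple_run_cover d n B"
  using assms
proof (induction n arbitrary: B a)
  case 0
  have "alt_term B a 0 = 1 / real (B + d)"
    and "alt_term B a 1 = 1 / (real (B + d) * real (B + 2 * d))"
    and "alt_term B a 2 = 1 / (real (B + d) * real (B + 2 * d) * real (B + 3 * d))"
    using 0 by (simp_all add: alt_term_def numeral_2_eq_2 numeral_3_eq_3 mult_ac)
  then show ?case
    using offset_alt_series_lower[OF 0(1), of B] offset_alt_series_upper2[OF 0(1), of B] by simp
next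
  case (Suc n)
  obtain c where c: "a 0 = Suc c"
    using Suc.prems(1) by (metis gr0_implies_Suc)
  have "offset_alt_series (B + a 0) (\<lambda>i. a (Suc i)) \<in> triple_run_cover d n (B + a 0)"
    using Suc.prems by (intro Suc.IH) auto
  moreover have "1 - real (B + a 0) * offset_alt_series B a = offset_alt_series (B + a 0) (\<lambda>i. a (Suc i))"
    using Suc.prems(1) c by (simp add: offset_alt_series_rec[of a B] field_simps)
  ultimately have "1 - real (B + Suc c) * offset_alt_series B a \<in> triple_run_cover d n (B + Suc c)"
    using c by simp
  then show ?case
    by auto
qed

lemma triple_run_cover_borel [measurable]: "triple_run_cover d n B \<in> sets borel"
  by (induction n arbitrary: B) (auto intro!: measurable_sets_borel[of _ borel])

lemma emeasure_triple_run_cover_le: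
  assumes "1 \<le> d"
  shows "emeasure lborel (triple_run_cover d n B) \<le> ennreal (1 / (real (B + 1) * real (B + n + 1) ^ 2))"
proof (induction n arbitrary: B)
  case 0
  have "1 / (real (B + d) * real (B + 2 * d) * real (B + 3 * d))
      \<le> 1 / ((1 + real B) * (1 + real B) * (1 + real B))"
    using assms by (intro divide_left_mono mult_mono mult_pos_pos) auto
  then show ?case
    by (simp add: power2_eq_square mult_ac ennreal_leI)
next
  case (Suc n)
  define K where "K = 1 / real (B + n + 2) ^ 2"
  have piece: "emeasure lborel ((\<lambda>x. 1 - real (B + Suc c) * x) -` triple_run_cover d n (B + Suc c))
      \<le> ennreal (K * (1 / (real (B + c + 1) * real (B + c + 2))))" for c
  proof -
    let ?C = "real (B + Suc c)" and ?T = "triple_run_cover d n (B + Suc c)"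
    have "emeasure lborel ((\<lambda>x. 1 - ?C * x) -` ?T) = emeasure lborel ((\<lambda>x. 1 + (- ?C) * x) -` ?T)"
      by (simp only: minus_mult_left diff_conv_add_uminus)
    also have "\<dots> = ennreal (1 / \<bar>- ?C\<bar>) * emeasure lborel ?T"
      by (rule emeasure_lborel_affine_vimage) auto
    also have "\<dots> = ennreal (1 / ?C) * emeasure lborel ?T"
      by (simp only: abs_minus_cancel abs_of_nat)
    also have "\<dots> \<le> ennreal (1 / ?C) * ennreal (1 / (real (B + c + 2) * real (B + c + n + 2) ^ 2))"
    proof (rule mult_left_mono)
      have "B + Suc c + 1 = B + c + 2" "B + Suc c + n + 1 = B + c + n + 2"
        by simp_all
      then show "emeasure lborel ?T \<le> ennreal (1 / (real (B + c + 2) * real (B + c + n + 2) ^ 2))"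
        using Suc.IH[of "B + Suc c"] by (simp only:)
    qed simp
    also have "\<dots> = ennreal (1 / (real (B + c + 2) * real (B + c + n + 2) ^ 2) / ?C)"
      by (simp add: ennreal_mult'[symmetric])
    also have "\<dots> \<le> ennreal (K * (1 / (real (B + c + 1) * real (B + c + 2))))"
    proof (rule ennreal_leI)
      have "1 / (real (B + c + 2) * real (B + c + n + 2) ^ 2) / ?C
          = 1 / (real (B + c + n + 2) ^ 2 * (real (B + c + 1) * real (B + c + 2)))"
        by (simp add: field_simps)
      also have "\<dots> \<le> 1 / (real (B + n + 2) ^ 2 * (real (B + c + 1) * real (B + c + 2)))"
        by (intro divide_left_mono mult_right_mono mult_pos_pos power_mono) auto
      finally show "1 / (real (B + c + 2) * real (B + c + n + 2) ^ 2) / ?C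
          \<le> K * (1 / (real (B + c + 1) * real (B + c + 2)))"
        by (simp add: K_def)
    qed
    finally show ?thesis .
  qed
  have "emeasure lborel (triple_run_cover d (Suc n) B)
      \<le> (\<Sum>c. emeasure lborel ((\<lambda>x. 1 - real (B + Suc c) * x) -` triple_run_cover d n (B + Suc c)))"
    by simp (rule emeasure_subadditive_countably, auto intro!: measurable_sets_borel[of _ borel])
  also have "\<dots> \<le> (\<Sum>c. ennreal (K * (1 / (real (B + c + 1) * real (B + c + 2)))))"
    by (intro suminf_le piece) auto
  also have "\<dots> = ennreal (K * (1 / real (B + 1)))"
    using sums_mult[OF sums_inverse_consecutive_products, of K]
    by (subst suminf_ennreal2) (auto simp: sums_iff K_def)
  finally show ?case
    by (simp add: K_def mult_ac)
qed

lemma limsup_triple_run_cover_null: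
  assumes "1 \<le> d"
  shows "limsup (\<lambda>n. triple_run_cover d n 0) \<in> null_sets lborel"
proof (rule borel_cantelli_limsup1)
  have bound: "emeasure lborel (triple_run_cover d n 0) \<le> ennreal (1 / real (Suc n) ^ 2)" for n
    using emeasure_triple_run_cover_le[OF assms, of n 0] by simp
  then show "emeasure lborel (triple_run_cover d n 0) < \<infinity>" for n
    by (rule order.strict_trans1) simp
  have measure_bound: "measure lborel (triple_run_cover d n 0) \<le> 1 / real (Suc n) ^ 2" for n
    unfolding measure_def by (rule enn2real_leI[OF _ bound]) simp
  have "summable (\<lambda>n. 1 / real (Suc n) ^ 2)"
    using summable_Suc_iff[where f = "\<lambda>n. inverse (real n ^ 2)"] inverse_power_summable[of 2]
    by (simp add: divide_inverse)
  then show "summable (\<lambda>n. measure lborel (triple_run_cover d n 0))"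
    by (rule summable_comparison_test')
       (simp only: real_norm_def abs_of_nonneg[OF measure_nonneg] measure_bound)
qed (simp only: sets_lborel triple_run_cover_borel)

lemma offset_alt_series_in_limsup_triple_run_cover:
  assumes "\<forall>i. 0 < a i" "\<exists>\<^sub>\<infinity>n. a n = d \<and> a (Suc n) = d \<and> a (Suc (Suc n)) = d"
  shows "offset_alt_series 0 a \<in> limsup (\<lambda>n. triple_run_cover d n 0)"
proof -
  have "\<forall>m. \<exists>n\<ge>m. offset_alt_series 0 a \<in> triple_run_cover d n 0"
    using assms(2) offset_alt_series_in_triple_run_cover[OF assms(1)] unfolding INFM_nat_le by blast
  then show ?thesis
    by (auto simp: limsup_INF_SUP)
qed

lemma (in prob_space) emeasure_distr_eq_1_AE:
  assumes "f \<in> measurable M N" "A \<in> sets N" "AE x in M. f x \<in> A"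
  shows "emeasure (distr M N f) A = 1"
  using assms by (simp add: emeasure_distr emeasure_eq_1_AE measurable_sets)

lemma (in prob_space) exists_point_prob_pos:
  fixes f :: "'a \<Rightarrow> 'b::countable"
  assumes [measurable]: "f \<in> measurable M (count_space UNIV)"
  shows "\<exists>v. 0 < prob (f -` {v} \<inter> space M)"
proof (rule ccontr)
  assume "\<nexists>v. 0 < prob (f -` {v} \<inter> space M)"
  then have "f -` {v} \<inter> space M \<in> null_sets M" for v
    by (auto simp: null_sets_def emeasure_eq_measure not_less measure_le_0_iff)
  then have "(\<Union>v. f -` {v} \<inter> space M) \<in> null_sets M"
    by blast
  moreover have "(\<Union>v. f -` {v} \<inter> space M) = space M"
    by blast
  ultimately show False
    using emeasure_space_1 by (simp add: null_sets_def)
qed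

lemma (in prob_space) point_prob_bounded:
  assumes [measurable]: "f \<in> measurable M (count_space UNIV)"
    and "\<And>v. prob (f -` {v} \<inter> space M) < 1"
  shows "\<exists>\<rho><1. \<forall>v. prob (f -` {v} \<inter> space M) \<le> \<rho>"
proof (cases "\<exists>w. 1 / 2 < prob (f -` {w} \<inter> space M)")
  case True
  then obtain w where w: "1 / 2 < prob (f -` {w} \<inter> space M)" ..
  have "prob (f -` {v} \<inter> space M) \<le> prob (f -` {w} \<inter> space M)" for v
  proof (cases "v = w")
    case False
    then have "prob (f -` {v} \<inter> space M) + prob (f -` {w} \<inter> space M)
        = prob ((f -` {v} \<inter> space M) \<union> (f -` {w} \<inter> space M))"
      by (intro finite_measure_Union[symmetric]) auto
    also have "\<dots> \<le> 1"
      by (rule prob_le_1)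
    finally show ?thesis
      using w by linarith
  qed simp
  then show ?thesis
    using assms(2)[of w] by blast
next
  case False
  then show ?thesis
    by (intro exI[of _ "1 / 2"]) (auto simp: not_less)
qed

text \<open>A second Borel--Cantelli lemma: by the Borel 0--1 law it suffices that the limit
  superior has positive probability, which follows from continuity from above.\<close>
lemma (in prob_space) AE_frequently_indep_events:
  fixes A :: "nat \<Rightarrow> 'a set"
  assumes indep: "indep_events A UNIV" and "0 < p" and p_le: "\<And>m. p \<le> prob (A m)"
  shows "AE x in M. \<exists>\<^sub>\<infinity>m. x \<in> A m"
proof -
  have [measurable]: "A m \<in> events" for m
    using indep by (auto simp: indep_events_def)
  define L where "L = (\<Inter>n. \<Union>m\<in>{n..}. A m)"
  have "(\<lambda>n. prob (\<Union>m\<in>{n..}. A m)) \<longlonglongrightarrow> prob L"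
    unfolding L_def by (rule finite_Lim_measure_decseq) (auto simp: decseq_def intro: order_trans)
  moreover have "p \<le> prob (\<Union>m\<in>{n..}. A m)" for n
    using p_le[of n] by (rule order_trans) (rule finite_measure_mono, auto)
  ultimately have "p \<le> prob L"
    by (intro LIMSEQ_le_const) auto
  then have "prob L = 1"
    using borel_0_1_law[OF indep] \<open>0 < p\<close> unfolding L_def by auto
  then have "AE x in M. x \<in> L"
    by (rule AE_prob_1)
  then show ?thesis
    by eventually_elim (auto simp: L_def INFM_nat_le)
qed

locale iid_positive_nat_seq = prob_space +
  fixes X :: "nat \<Rightarrow> 'a \<Rightarrow> nat"
  assumes measurable_X [measurable]: "X k \<in> measurable M (count_space UNIV)"
    and X_pos: "\<omega> \<in> space M \<Longrightarrow> 0 < X k \<omega>"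
    and indep_X: "indep_vars (\<lambda>_. count_space UNIV) X UNIV"
    and distr_X: "distr M (count_space UNIV) (X k) = distr M (count_space UNIV) (X 0)"
begin

abbreviation eta :: "'a \<Rightarrow> real" where
  "eta \<omega> \<equiv> alt_series (\<lambda>k. X k \<omega>)"

lemma measurable_eta [measurable]: "eta \<in> borel_measurable M"
  unfolding alt_series_def by measurable

lemma prob_X_eq: "prob (X k -` {v} \<inter> space M) = prob (X 0 -` {v} \<inter> space M)"
proof -
  have "prob (X k -` {v} \<inter> space M) = measure (distr M (count_space UNIV) (X k)) {v}"
    by (simp add: measure_distr)
  also have "\<dots> = prob (X 0 -` {v} \<inter> space M)"
    by (subst distr_X) (simp add: measure_distr)
  finally show ?thesis .
qed

lemma AE_frequently_triple_run:
  assumes "0 < prob (X 0 -` {d} \<inter> space M)"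
  shows "AE \<omega> in M. \<exists>\<^sub>\<infinity>n. X n \<omega> = d \<and> X (Suc n) \<omega> = d \<and> X (Suc (Suc n)) \<omega> = d"
proof -
  define p where "p = prob (X 0 -` {d} \<inter> space M)"
  define block where "block m = {3 * m, Suc (3 * m), Suc (Suc (3 * m))}" for m :: nat
  define run where "run n f \<longleftrightarrow> f n = d \<and> f (Suc n) = d \<and> f (Suc (Suc n)) = d" for n and f :: "nat \<Rightarrow> nat"
  have "indep_vars (\<lambda>m. PiM (block m) (\<lambda>_. count_space UNIV))
      (\<lambda>m \<omega>. restrict (\<lambda>i. X i \<omega>) (block m)) UNIV"
    by (rule indep_vars_restrict[OF indep_X]) (auto simp: block_def disjoint_family_on_def)
  then have "indep_events (\<lambda>m. {\<omega>\<in>space M. run (3 * m) (restrict (\<lambda>i. X i \<omega>) (block m))}) UNIV"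
    by (rule indep_eventsI_indep_vars) (simp add: run_def block_def)
  then have indep: "indep_events (\<lambda>m. {\<omega>\<in>space M. run (3 * m) (\<lambda>i. X i \<omega>)}) UNIV"
    by (simp add: run_def block_def)
  have "prob {\<omega>\<in>space M. run (3 * m) (\<lambda>i. X i \<omega>)} = p ^ 3" for m
  proof -
    have "{\<omega>\<in>space M. run (3 * m) (\<lambda>i. X i \<omega>)} = (\<Inter>i\<in>block m. X i -` {d} \<inter> space M)"
      by (auto simp: run_def block_def)
    also have "prob \<dots> = (\<Prod>i\<in>block m. prob (X i -` {d} \<inter> space M))"
      by (rule indep_varsD[OF indep_X]) (auto simp: block_def)
    also have "\<dots> = (\<Prod>i\<in>block m. p)"
      unfolding p_def by (intro prod.cong refl prob_X_eq)
    also have "\<dots> = p ^ 3"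
      by (simp add: block_def power3_eq_cube)
    finally show ?thesis .
  qed
  moreover have "0 < p ^ 3"
    using assms by (simp add: p_def)
  ultimately have "AE \<omega> in M. \<exists>\<^sub>\<infinity>m. \<omega> \<in> {\<omega>\<in>space M. run (3 * m) (\<lambda>i. X i \<omega>)}"
    by (intro AE_frequently_indep_events[OF indep, of "p ^ 3"]) auto
  then show ?thesis
  proof eventually_elim
    case (elim \<omega>)
    then have "\<exists>\<^sub>\<infinity>m. run (3 * m) (\<lambda>i. X i \<omega>)"
      by simp
    then show ?case
      unfolding run_def by (rule INFM_inj) (simp add: inj_on_def)
  qed
qed

lemma distr_eta_concentrated_on_null_set:
  "\<exists>N\<in>null_sets lborel. emeasure (distr M borel eta) N = 1"
proof -
  obtain d where d: "0 < prob (X 0 -` {d} \<inter> space M)"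
    using exists_point_prob_pos[OF measurable_X] by blast
  then obtain \<omega> where "\<omega> \<in> space M" "X 0 \<omega> = d"
    by (metis disjoint_iff_not_equal measure_empty order_less_irrefl vimage_singleton_eq)
  then have "1 \<le> d"
    using X_pos by (metis Suc_le_eq One_nat_def)
  define N where "N = limsup (\<lambda>n. triple_run_cover d n 0)"
  have "N \<in> null_sets lborel"
    unfolding N_def by (rule limsup_triple_run_cover_null[OF \<open>1 \<le> d\<close>])
  moreover have "AE \<omega> in M. eta \<omega> \<in> N"
    using AE_frequently_triple_run[OF d] AE_space
  proof eventually_elim
    case (elim \<omega>)
    then show ?case
      unfolding N_def alt_series_eq_offset_alt_series
      by (intro offset_alt_series_in_limsup_triple_run_cover) (simp_all add: X_pos)
  qed
  then have "emeasure (distr M borel eta) N = 1"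
    using \<open>N \<in> null_sets lborel\<close> by (intro emeasure_distr_eq_1_AE) auto
  ultimately show ?thesis ..
qed

lemma prob_eta_singleton_le_power:
  assumes "\<And>v. prob (X 0 -` {v} \<inter> space M) \<le> \<rho>"
  shows "prob (eta -` {x} \<inter> space M) \<le> \<rho> ^ Suc K"
proof (cases "eta -` {x} \<inter> space M = {}")
  case True
  have "0 \<le> \<rho>"
    using assms[of 0] measure_nonneg[of M] by (rule order_trans[rotated])
  then show ?thesis
    using True by simp
next
  case False
  then obtain \<omega>\<^sub>0 where \<omega>\<^sub>0: "\<omega>\<^sub>0 \<in> space M" "eta \<omega>\<^sub>0 = x"
    by auto
  have "X k \<omega> = X k \<omega>\<^sub>0" if "\<omega> \<in> space M" "eta \<omega> = x" for \<omega> k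
  proof -
    have "(\<lambda>k. X k \<omega>) = (\<lambda>k. X k \<omega>\<^sub>0)"
      using that \<omega>\<^sub>0 X_pos
      by (intro offset_alt_series_inj[of _ _ 0]) (simp_all add: alt_series_eq_offset_alt_series)
    then show ?thesis
      by metis
  qed
  then have "eta -` {x} \<inter> space M \<subseteq> (\<Inter>k\<in>{..K}. X k -` {X k \<omega>\<^sub>0} \<inter> space M)"
    by auto
  moreover have "(\<Inter>k\<in>{..K}. X k -` {X k \<omega>\<^sub>0} \<inter> space M) \<in> events"
    by (intro sets.finite_INT measurable_sets[OF measurable_X]) auto
  ultimately have "prob (eta -` {x} \<inter> space M) \<le> prob (\<Inter>k\<in>{..K}. X k -` {X k \<omega>\<^sub>0} \<inter> space M)"
    by (rule finite_measure_mono)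
  also have "\<dots> = (\<Prod>k\<in>{..K}. prob (X k -` {X k \<omega>\<^sub>0} \<inter> space M))"
    by (rule indep_varsD[OF indep_X]) auto
  also have "\<dots> \<le> (\<Prod>k\<in>{..K}. \<rho>)"
    using assms by (intro prod_mono) (metis measure_nonneg prob_X_eq)
  finally show ?thesis
    by simp
qed

lemma distr_eta_atomless:
  assumes "\<And>v. prob (X 0 -` {v} \<inter> space M) < 1"
  shows "emeasure (distr M borel eta) {x} = 0"
proof -
  obtain \<rho> where "\<rho> < 1" and \<rho>: "\<And>v. prob (X 0 -` {v} \<inter> space M) \<le> \<rho>"
    using point_prob_bounded[OF measurable_X assms] by blast
  have "0 \<le> \<rho>"
    using \<rho>[of 0] measure_nonneg[of M] by (rule order_trans[rotated])
  have "(\<lambda>K. \<rho> ^ Suc K) \<longlonglongrightarrow> 0"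
    using \<open>0 \<le> \<rho>\<close> \<open>\<rho> < 1\<close> by (intro LIMSEQ_Suc LIMSEQ_power_zero) simp
  then have "prob (eta -` {x} \<inter> space M) \<le> 0"
    using prob_eta_singleton_le_power[OF \<rho>] by (intro LIMSEQ_le_const) auto
  then show ?thesis
    by (simp add: emeasure_distr emeasure_eq_measure measure_le_0_iff)
qed

lemma distr_eta_point_mass:
  assumes "prob (X 0 -` {w} \<inter> space M) = 1"
  shows "emeasure (distr M borel eta) {alt_series (\<lambda>_. w)} = 1"
proof (rule emeasure_distr_eq_1_AE)
  have "AE \<omega> in M. \<omega> \<in> X k -` {w} \<inter> space M" for k
    using assms by (intro AE_prob_1) (simp add: prob_X_eq[of k])
  then have "AE \<omega> in M. \<forall>k. X k \<omega> = w"
    by (simp add: AE_all_countable)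
  then show "AE \<omega> in M. eta \<omega> \<in> {alt_series (\<lambda>_. w)}"
    by eventually_elim (simp add: fun_eq_iff[symmetric])
qed auto

end

theorem mainTheorem8:
  fixes M :: "'a measure" and X :: "nat \<Rightarrow> 'a \<Rightarrow> nat"
  assumes "prob_space M"
    and "\<And>k. X k \<in> measurable M (count_space UNIV)"
    and "\<And>k \<omega>. \<omega> \<in> space M \<Longrightarrow> X k \<omega> \<ge> 1"
    and "prob_space.indep_vars M (\<lambda>_. count_space UNIV) X UNIV"
    and "\<And>k. distr M (count_space UNIV) (X k) = distr M (count_space UNIV) (X 0)"
  shows "(purely_discrete (distr M borel (\<lambda>\<omega>. alt_series (\<lambda>k. X k \<omega>)))
          \<or> purely_singular_continuous (distr M borel (\<lambda>\<omega>. alt_series (\<lambda>k. X k \<omega>))))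
         \<and> \<not> absolutely_continuous lborel (distr M borel (\<lambda>\<omega>. alt_series (\<lambda>k. X k \<omega>)))"
proof -
  have "0 < X k \<omega>" if "\<omega> \<in> space M" for k \<omega>
    using assms(3)[of \<omega> k] that by simp
  with assms interpret iid_positive_nat_seq M X
    by (intro iid_positive_nat_seq.intro iid_positive_nat_seq_axioms.intro)
  let ?\<mu> = "distr M borel eta"
  have \<mu>_UNIV: "emeasure ?\<mu> UNIV = 1"
    using prob_space.emeasure_space_1[OF prob_space_distr[OF measurable_eta]] by simp
  obtain N where N: "N \<in> null_sets lborel" "emeasure ?\<mu> N = 1"
    using distr_eta_concentrated_on_null_set by blast
  have "purely_discrete ?\<mu> \<or> purely_singular_continuous ?\<mu>"
  proof (cases "\<exists>w. prob (X 0 -` {w} \<inter> space M) = 1")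
    case True
    then obtain w where "prob (X 0 -` {w} \<inter> space M) = 1" ..
    then show ?thesis
      using distr_eta_point_mass \<mu>_UNIV unfolding purely_discrete_def by (metis countable_insert countable_empty)
  next
    case False
    then have "prob (X 0 -` {v} \<inter> space M) < 1" for v
      using prob_le_1 by (metis order_less_le)
    then have "purely_singular_continuous ?\<mu>"
      unfolding purely_singular_continuous_def
      using distr_eta_atomless N \<mu>_UNIV by (auto simp: null_sets_def)
    then show ?thesis ..
  qed
  moreover have "\<not> absolutely_continuous lborel ?\<mu>"
    using N unfolding absolutely_continuous_def by (auto simp: null_sets_def)
  ultimately show ?thesis
    by blast
qed

end
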